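(* Let $B=\mathrm{Borel}(m_1,\dots,m_r)$ be a Borel ideal of $S=k[x_1,\dots,x_n]$ with $r\ge2$ and $d=\deg(m_r)\ge\deg(m_i)$ for all $i$. Put $B'=\mathrm{Borel}(m_1,\dots,m_{r-1})$ and $B''=\mathrm{Borel}(m_r)\cap B'$. Then $B''$ is generated entirely in degree $d$, and for all $i,j$ \[b_{i,j}(B)=b_{i,j}(B')+b_{i,j}(\mathrm{Borel}(m_r))-b_{i,j}(B'').\]
   Context: A Borel ideal is a monomial ideal closed under Borel moves $\mu\mapsto\mu\frac{x_{a_1}}{x_{b_1}}\cdots\frac{x_{a_s}}{x_{b_s}}$ ($a_t<b_t$, all $x_{b_t}\mid\mu$); $\mathrm{Borel}(T)$ is the smallest Borel ideal containing the set of monomials $T$. $b_{i,j}(I)=\dim_k\operatorname{Tor}_i^S(I,k)_j$ are the graded Betti numbers of $I$ over $S$. *)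

theory Defs
  imports Main "Jordan_Normal_Form.DL_Rank"
begin

text \<open>Monomials of S = k[x_1,...,x_n] are exponent vectors a :: nat => nat,
  where index i (0 <= i < n) stands for the variable x_(i+1), and a l = 0 for l >= n.
  A monomial ideal is identified with the set of monomials it contains.\<close>

definition mons :: "nat \<Rightarrow> (nat \<Rightarrow> nat) set" where
  "mons n = {a. \<forall>l\<ge>n. a l = 0}"

definition mdeg :: "nat \<Rightarrow> (nat \<Rightarrow> nat) \<Rightarrow> nat" where
  "mdeg n a = (\<Sum>l<n. a l)"

definition mdvd :: "(nat \<Rightarrow> nat) \<Rightarrow> (nat \<Rightarrow> nat) \<Rightarrow> bool" where
  "mdvd a b \<longleftrightarrow> (\<forall>l. a l \<le> b l)"

text \<open>Elementary Borel move mu * x_a / x_b with a < b and x_b | mu.\<close>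
definition borel_move :: "(nat \<Rightarrow> nat) \<Rightarrow> nat \<Rightarrow> nat \<Rightarrow> nat \<Rightarrow> nat" where
  "borel_move mu a b = (\<lambda>l. if l = a then mu l + 1 else if l = b then mu l - 1 else mu l)"

definition monomial_ideal :: "nat \<Rightarrow> (nat \<Rightarrow> nat) set \<Rightarrow> bool" where
  "monomial_ideal n I \<longleftrightarrow> I \<subseteq> mons n \<and>
     (\<forall>u\<in>I. \<forall>v\<in>mons n. mdvd u v \<longrightarrow> v \<in> I)"

definition borel_ideal :: "nat \<Rightarrow> (nat \<Rightarrow> nat) set \<Rightarrow> bool" where
  "borel_ideal n I \<longleftrightarrow> monomial_ideal n I \<and>
     (\<forall>mu\<in>I. \<forall>a b. a < b \<longrightarrow> b < n \<longrightarrow> 1 \<le> mu b \<longrightarrow> borel_move mu a b \<in> I)"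

definition Borel :: "nat \<Rightarrow> (nat \<Rightarrow> nat) set \<Rightarrow> (nat \<Rightarrow> nat) set" where
  "Borel n T = \<Inter>{I. borel_ideal n I \<and> T \<subseteq> I}"

definition mingens :: "(nat \<Rightarrow> nat) set \<Rightarrow> (nat \<Rightarrow> nat) set" where
  "mingens I = {g\<in>I. \<forall>h\<in>I. mdvd h g \<longrightarrow> h = g}"

text \<open>Koszul complex I (x) K(x_1,...,x_n) in multidegree alpha. Its i-th module has
  k-basis m (x) e_F with F a subset of {0..<n} of size i, m in I and m * x_F = x^alpha.
  Subsets F are represented as strictly increasing lists (elements of subseqs [0..<n]).\<close>
definition kos_ok :: "(nat \<Rightarrow> nat) set \<Rightarrow> (nat \<Rightarrow> nat) \<Rightarrow> nat list \<Rightarrow> bool" where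
  "kos_ok I alpha F \<longleftrightarrow> (\<forall>l\<in>set F. 1 \<le> alpha l) \<and>
     (\<lambda>l. if l \<in> set F then alpha l - 1 else alpha l) \<in> I"

definition kos_basis :: "nat \<Rightarrow> (nat \<Rightarrow> nat) set \<Rightarrow> (nat \<Rightarrow> nat) \<Rightarrow> nat \<Rightarrow> nat list list" where
  "kos_basis n I alpha i = filter (\<lambda>F. length F = i \<and> kos_ok I alpha F) (subseqs [0..<n])"

text \<open>Coefficient of e_G in the Koszul differential of e_F:
  d(e_F) = sum over j in F of (-1)^(#{l in F. l < j}) x_j e_(F - {j}).\<close>
definition kos_coeff :: "nat list \<Rightarrow> nat list \<Rightarrow> 'k::field" where
  "kos_coeff F G = (if \<exists>j\<in>set F. set G = set F - {j}
      then (let j = (THE j. j \<in> set F \<and> set G = set F - {j})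
            in (-1) ^ card {l\<in>set F. l < j})
      else 0)"

text \<open>Matrix of the differential from homological degree i (columns) to i-1 (rows).\<close>
definition kos_mat :: "'k::field itself \<Rightarrow> nat \<Rightarrow> (nat \<Rightarrow> nat) set \<Rightarrow> (nat \<Rightarrow> nat) \<Rightarrow> nat \<Rightarrow> 'k mat" where
  "kos_mat _ n I alpha i =
     (let R = kos_basis n I alpha (i - 1); C = kos_basis n I alpha i
      in mat (length R) (length C) (\<lambda>(r, c). kos_coeff (C ! c) (R ! r)))"

definition kos_rank :: "'k::field itself \<Rightarrow> nat \<Rightarrow> (nat \<Rightarrow> nat) set \<Rightarrow> (nat \<Rightarrow> nat) \<Rightarrow> nat \<Rightarrow> nat" where
  "kos_rank K n I alpha i =
     (if i = 0 then 0
      else vec_space.rank (length (kos_basis n I alpha (i - 1))) (kos_mat K n I alpha i))"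

text \<open>Multigraded Betti number: dim_k Tor_i^S(I,k)_alpha = dim_k H_i(I (x) K)_alpha.\<close>
definition multibetti :: "'k::field itself \<Rightarrow> nat \<Rightarrow> (nat \<Rightarrow> nat) set \<Rightarrow> nat \<Rightarrow> (nat \<Rightarrow> nat) \<Rightarrow> nat" where
  "multibetti K n I i alpha =
     length (kos_basis n I alpha i) - kos_rank K n I alpha i - kos_rank K n I alpha (i + 1)"

text \<open>Graded Betti number b_(i,j)(I) = dim_k Tor_i^S(I,k)_j (sum over multidegrees of degree j).\<close>
definition betti :: "'k::field itself \<Rightarrow> nat \<Rightarrow> (nat \<Rightarrow> nat) set \<Rightarrow> nat \<Rightarrow> nat \<Rightarrow> nat" where
  "betti K n I i j = (\<Sum>alpha\<in>{a\<in>mons n. mdeg n a = j}. multibetti K n I i alpha)"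

end

theory Submission
  imports Defs "HOL-Library.Function_Algebras"
begin

text \<open>The graded Betti numbers are sums of multigraded ones, computed in each multidegree
  \<alpha> from the Koszul complex of the ideal, whose chains are spanned by the sets F of variables
  with x^\<alpha>/x_F in the ideal. For monomial ideals I and J the chains of I \<union> J and of
  I \<inter> J are the sum and the intersection of those of I and J, so the Betti numbers of
  I \<union> J are given by inclusion-exclusion as soon as every common boundary of I and J is a
  boundary of I \<inter> J.

  Take I = Borel(m_1, ..., m_(r-1)) and J = Borel(m_r), all generators of degree at most d.
  A Borel ideal generated in degrees at most d is closed, above degree d, under division by
  the last variable of a monomial; so is I \<inter> J, which is therefore generated in degree d.
  In a multidegree \<alpha> of degree large enough, wedging with e_p, where x_p is the last variable of
  x^\<alpha>, is a contracting homotopy on the relevant part of the Koszul complex of I \<inter> J, and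
  a common boundary of I and J, being a cycle of I \<inter> J, is a boundary of I \<inter> J. In the
  remaining multidegrees J has no boundaries at all.\<close>

section \<open>Borel ideals\<close>

lemma borel_ideal_mons: "borel_ideal n (mons n)"
  unfolding borel_ideal_def monomial_ideal_def mons_def borel_move_def by auto

lemma borel_ideal_Inter:
  assumes "\<I> \<noteq> {}" and "\<And>I. I \<in> \<I> \<Longrightarrow> borel_ideal n I"
  shows "borel_ideal n (\<Inter>\<I>)"
proof -
  have "\<Inter>\<I> \<subseteq> mons n"
    using assms unfolding borel_ideal_def monomial_ideal_def by blast
  with assms show ?thesis
    unfolding borel_ideal_def monomial_ideal_def by simp blast
qed

lemma borel_ideal_Un:
  "borel_ideal n I \<Longrightarrow> borel_ideal n J \<Longrightarrow> borel_ideal n (I \<union> J)"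
  unfolding borel_ideal_def monomial_ideal_def by blast

lemma monomial_ideal_Un:
  "monomial_ideal n I \<Longrightarrow> monomial_ideal n J \<Longrightarrow> monomial_ideal n (I \<union> J)"
  unfolding monomial_ideal_def by blast

lemma monomial_ideal_Int:
  "monomial_ideal n I \<Longrightarrow> monomial_ideal n J \<Longrightarrow> monomial_ideal n (I \<inter> J)"
  unfolding monomial_ideal_def by blast

lemma Borel_superset: "T \<subseteq> Borel n T"
  unfolding Borel_def by auto

lemma Borel_least: "borel_ideal n I \<Longrightarrow> T \<subseteq> I \<Longrightarrow> Borel n T \<subseteq> I"
  unfolding Borel_def by auto

lemma borel_ideal_Borel:
  assumes "T \<subseteq> mons n"
  shows "borel_ideal n (Borel n T)"
  unfolding Borel_def using assms borel_ideal_mons by (intro borel_ideal_Inter) auto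

lemma Borel_mono: "T \<subseteq> U \<Longrightarrow> U \<subseteq> mons n \<Longrightarrow> Borel n T \<subseteq> Borel n U"
  by (meson Borel_least Borel_superset borel_ideal_Borel order_trans)

lemma Borel_Un:
  assumes "T \<subseteq> mons n" and "U \<subseteq> mons n"
  shows "Borel n (T \<union> U) = Borel n T \<union> Borel n U"
proof
  show "Borel n (T \<union> U) \<subseteq> Borel n T \<union> Borel n U"
    using assms Borel_superset
    by (intro Borel_least borel_ideal_Un borel_ideal_Borel) blast+
  show "Borel n T \<union> Borel n U \<subseteq> Borel n (T \<union> U)"
    using assms by (intro Un_least Borel_mono) auto
qed

lemma monomial_idealI_mult_var:
  assumes mons: "I \<subseteq> mons n"
    and mult_var: "\<And>u l. u \<in> I \<Longrightarrow> l < n \<Longrightarrow> u(l := u l + 1) \<in> I"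
  shows "monomial_ideal n I"
proof -
  have "v \<in> I" if "u \<in> I" "v \<in> mons n" "mdvd u v" for u v
    using that
  proof (induction "\<Sum>l<n. v l - u l" arbitrary: u rule: less_induct)
    case less
    show ?case
    proof (cases "\<exists>l<n. u l < v l")
      case no_gap: False
      have "u = v"
      proof
        fix l
        show "u l = v l"
        proof (cases "l < n")
          case True
          with no_gap less.prems(3) show ?thesis
            unfolding mdvd_def by (meson le_antisym not_less)
        next
          case False
          with less.prems mons show ?thesis
            unfolding mons_def by auto
        qed
      qed
      then show ?thesis
        using less.prems by simp
    next
      case True
      then obtain l where l: "l < n" "u l < v l" by auto
      have "(\<Sum>k<n. v k - (u(l := u l + 1)) k) < (\<Sum>k<n. v k - u k)"
        using l by (intro sum_strict_mono_ex1) auto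
      moreover have "mdvd (u(l := u l + 1)) v"
        using less.prems l unfolding mdvd_def by auto
      ultimately show ?thesis
        using less mult_var l by blast
    qed
  qed
  then show ?thesis
    unfolding monomial_ideal_def using mons by blast
qed

lemma mdeg_mono: "mdvd u v \<Longrightarrow> mdeg n u \<le> mdeg n v"
  unfolding mdeg_def mdvd_def by (simp add: sum_mono)

lemma mdeg_borel_move:
  assumes "a < b" and "b < n" and "1 \<le> u b"
  shows "mdeg n (borel_move u a b) = mdeg n u"
proof -
  have "(\<Sum>l<n. borel_move u a b l + (if l = b then 1 else 0))
      = (\<Sum>l<n. u l + (if l = a then 1 else 0))"
    using assms unfolding borel_move_def by (intro sum.cong) auto
  then show ?thesis
    unfolding mdeg_def sum.distrib using assms by simp
qed

lemma mdeg_divide_vars: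
  assumes "F \<subseteq> {0..<n}" and "\<forall>l\<in>F. 1 \<le> \<alpha> l"
  shows "mdeg n (\<lambda>l. if l \<in> F then \<alpha> l - 1 else \<alpha> l) + card F = mdeg n \<alpha>"
proof -
  have "(\<Sum>l<n. (if l \<in> F then 1 else 0::nat)) = card F"
    using assms(1) by (simp add: sum.If_cases Int_absorb1 subset_eq)
  moreover have "(\<Sum>l<n. (if l \<in> F then \<alpha> l - 1 else \<alpha> l) + (if l \<in> F then 1 else 0))
      = (\<Sum>l<n. \<alpha> l)"
    using assms(2) by (intro sum.cong) auto
  ultimately show ?thesis
    unfolding mdeg_def sum.distrib by simp
qed

lemma Borel_mdeg_ge:
  assumes "T \<subseteq> mons n" and "\<forall>t\<in>T. D \<le> mdeg n t" and "w \<in> Borel n T"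
  shows "D \<le> mdeg n w"
proof -
  have "borel_ideal n {w\<in>mons n. D \<le> mdeg n w}"
    using borel_ideal_mons mdeg_mono mdeg_borel_move
    unfolding borel_ideal_def monomial_ideal_def by (auto intro: le_trans)
  with assms show ?thesis
    using Borel_least[of n "{w\<in>mons n. D \<le> mdeg n w}" T] by blast
qed

definition max_var :: "nat \<Rightarrow> (nat \<Rightarrow> nat) \<Rightarrow> nat \<Rightarrow> bool" where
  "max_var n w q \<longleftrightarrow> q < n \<and> 1 \<le> w q \<and> (\<forall>l>q. w l = 0)"

lemma max_var_exists:
  assumes "w \<in> mons n" and "0 < mdeg n w"
  obtains q where "max_var n w q"
proof -
  let ?S = "{l. l < n \<and> 1 \<le> w l}"
  have "?S \<noteq> {}"
  proof
    assume "?S = {}"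
    then have "mdeg n w = 0"
      unfolding mdeg_def by (simp add: not_le)
    with assms(2) show False by simp
  qed
  then have max_in: "Max ?S \<in> ?S"
    by (intro Max_in) auto
  have "max_var n w (Max ?S)"
    unfolding max_var_def
  proof (intro conjI allI impI)
    show "Max ?S < n" and "1 \<le> w (Max ?S)"
      using max_in by auto
    fix l
    assume l: "Max ?S < l"
    show "w l = 0"
    proof (cases "l < n")
      case True
      have "l \<notin> ?S"
      proof
        assume "l \<in> ?S"
        then have "l \<le> Max ?S"
          by simp
        with l show False
          by simp
      qed
      with True show ?thesis
        by simp
    next
      case False
      with assms(1) show ?thesis
        unfolding mons_def by simp
    qed
  qed
  then show thesis ..
qed

definition max_var_divisible :: "nat \<Rightarrow> nat \<Rightarrow> (nat \<Rightarrow> nat) set \<Rightarrow> bool" where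
  "max_var_divisible n D I \<longleftrightarrow>
     (\<forall>w\<in>I. D < mdeg n w \<longrightarrow> (\<forall>q. max_var n w q \<longrightarrow> w(q := w q - 1) \<in> I))"

lemma max_var_divisible_mult_var:
  assumes I: "borel_ideal n I" and u: "u \<in> I" and l: "l < n"
    and u_div: "\<And>q. D < mdeg n u \<Longrightarrow> max_var n u q \<Longrightarrow> u(q := u q - 1) \<in> I"
    and v: "v = u(l := u l + 1)" and q: "max_var n v q"
  shows "v(q := v q - 1) \<in> I"
proof (cases "q = l")
  case True
  then show ?thesis using u v by simp
next
  case q_ne_l: False
  have "\<not> q < l"
    using q v unfolding max_var_def by (metis fun_upd_same add_is_0 one_neq_zero)
  then have "l < q"
    using q_ne_l by simp
  then have u_q: "max_var n u q"
    using q v unfolding max_var_def by auto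
  show ?thesis
  proof (cases "D < mdeg n u")
    case True
    have "u(q := u q - 1) \<in> I"
      using u_div True u_q .
    moreover have "u \<in> mons n"
      using I u unfolding borel_ideal_def monomial_ideal_def by blast
    then have "(u(q := u q - 1))(l := u l + 1) \<in> mons n"
      using l unfolding mons_def by auto
    moreover have "mdvd (u(q := u q - 1)) ((u(q := u q - 1))(l := u l + 1))"
      using q_ne_l unfolding mdvd_def by auto
    ultimately have "(u(q := u q - 1))(l := u l + 1) \<in> I"
      using I unfolding borel_ideal_def monomial_ideal_def by blast
    moreover have "v(q := v q - 1) = (u(q := u q - 1))(l := u l + 1)"
      using q_ne_l v by (auto simp: fun_eq_iff)
    ultimately show ?thesis by simp
  next
    case False
    have "v(q := v q - 1) = borel_move u l q"
      using q_ne_l v unfolding borel_move_def by (auto simp: fun_eq_iff)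
    then show ?thesis
      using I u \<open>l < q\<close> u_q unfolding borel_ideal_def max_var_def by auto
  qed
qed

lemma max_var_divisible_borel_move:
  assumes I: "borel_ideal n I" and u: "u \<in> I" and ab: "a < b" "b < n" "1 \<le> u b"
    and u_div: "\<And>q. D < mdeg n u \<Longrightarrow> max_var n u q \<Longrightarrow> u(q := u q - 1) \<in> I"
    and v: "v = borel_move u a b" and deg: "D < mdeg n v" and q: "max_var n v q"
  shows "v(q := v q - 1) \<in> I"
proof -
  have move: "borel_move w a' b' \<in> I" if "w \<in> I" "a' < b'" "b' < n" "1 \<le> w b'" for w a' b'
    using I that unfolding borel_ideal_def by blast
  have D_u: "D < mdeg n u"
    using deg v mdeg_borel_move[of a b n u] ab by simp
  show ?thesis
  proof (cases "b \<le> q")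
    case True
    have "max_var n u q"
      using q v ab True unfolding max_var_def borel_move_def
      by (auto split: if_splits)
    then have w: "u(q := u q - 1) \<in> I"
      using u_div D_u by blast
    have "1 \<le> (u(q := u q - 1)) b"
      using q v ab True unfolding max_var_def borel_move_def by (auto split: if_splits)
    moreover have "v(q := v q - 1) = borel_move (u(q := u q - 1)) a b"
      using v ab True unfolding borel_move_def by (auto simp: fun_eq_iff)
    ultimately show ?thesis
      using move[OF w ab(1,2)] by simp
  next
    case False
    then have "v b = 0"
      using q unfolding max_var_def by simp
    then have u_b: "u b = 1"
      using v ab unfolding borel_move_def by auto
    have "max_var n u b"
      unfolding max_var_def
    proof (intro conjI allI impI)
      fix l
      assume "b < l"
      then have "q < l" and "l \<noteq> a" and "l \<noteq> b"
        using False ab by auto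
      then show "u l = 0"
        using q v unfolding max_var_def borel_move_def by auto
    qed (use ab u_b in auto)
    then have w: "u(b := u b - 1) \<in> I"
      using u_div D_u by blast
    have "a \<le> q"
      using q v ab unfolding max_var_def borel_move_def by (metis add_is_0 not_le one_neq_zero)
    show ?thesis
    proof (cases "q = a")
      case True
      have "v(q := v q - 1) = u(b := u b - 1)"
        using True v ab u_b unfolding borel_move_def by (auto simp: fun_eq_iff)
      then show ?thesis
        using w by simp
    next
      case q_ne_a: False
      have "1 \<le> (u(b := u b - 1)) q"
        using q v False q_ne_a unfolding max_var_def borel_move_def by auto
      moreover have "v(q := v q - 1) = borel_move (u(b := u b - 1)) a q"
        using q_ne_a False v ab u_b unfolding borel_move_def by (auto simp: fun_eq_iff)
      ultimately show ?thesis
        using move[OF w] \<open>a \<le> q\<close> q_ne_a q unfolding max_var_def by simp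
    qed
  qed
qed

text \<open>The elements of Borel(T) that may be divided by their last variable form a Borel
  ideal containing T.\<close>
lemma max_var_divisible_Borel:
  assumes T: "T \<subseteq> mons n" and deg_T: "\<forall>t\<in>T. mdeg n t \<le> D"
  shows "max_var_divisible n D (Borel n T)"
proof -
  let ?B = "Borel n T"
  define J where
    "J = {w \<in> ?B. D < mdeg n w \<longrightarrow> (\<forall>q. max_var n w q \<longrightarrow> w(q := w q - 1) \<in> ?B)}"
  have B: "borel_ideal n ?B"
    using T by (rule borel_ideal_Borel)
  then have J_mons: "J \<subseteq> mons n"
    unfolding J_def borel_ideal_def monomial_ideal_def by blast
  have "borel_ideal n J"
    unfolding borel_ideal_def
  proof (intro conjI ballI allI impI)
    show "monomial_ideal n J"
    proof (rule monomial_idealI_mult_var[OF J_mons])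
      fix u l
      assume "u \<in> J" and "l < n"
      moreover have "u(l := u l + 1) \<in> ?B"
        using B \<open>u \<in> J\<close> \<open>l < n\<close> J_mons
        unfolding J_def borel_ideal_def monomial_ideal_def mdvd_def mons_def by auto
      ultimately show "u(l := u l + 1) \<in> J"
        using max_var_divisible_mult_var[OF B] unfolding J_def by blast
    qed
  next
    fix u a b
    assume "u \<in> J" and "a < b" and "b < n" and "1 \<le> u b"
    moreover have "borel_move u a b \<in> ?B"
      using B calculation unfolding J_def borel_ideal_def by blast
    ultimately show "borel_move u a b \<in> J"
      using max_var_divisible_borel_move[OF B] unfolding J_def by blast
  qed
  moreover have "T \<subseteq> J"
    using Borel_superset deg_T unfolding J_def by fastforce
  ultimately have "?B \<subseteq> J"
    by (rule Borel_least)
  then show ?thesis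
    unfolding max_var_divisible_def J_def by blast
qed

lemma mdeg_mingens:
  assumes J: "monomial_ideal n J" and deg_J: "\<forall>w\<in>J. d \<le> mdeg n w"
    and div: "max_var_divisible n d J" and g: "g \<in> mingens J"
  shows "mdeg n g = d"
proof (rule ccontr)
  assume "mdeg n g \<noteq> d"
  with deg_J g have "d < mdeg n g"
    unfolding mingens_def by fastforce
  moreover have "g \<in> mons n"
    using J g unfolding monomial_ideal_def mingens_def by blast
  ultimately obtain q where q: "max_var n g q"
    using max_var_exists by (metis gr_zeroI not_less_zero)
  with div g \<open>d < mdeg n g\<close> have "g(q := g q - 1) \<in> J"
    unfolding max_var_divisible_def mingens_def by blast
  moreover have "mdvd (g(q := g q - 1)) g"
    unfolding mdvd_def by simp
  ultimately have "g(q := g q - 1) = g"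
    using g unfolding mingens_def by blast
  then show False
    using q unfolding max_var_def by (metis fun_upd_same diff_less less_le_trans less_numeral_extra(1)
        less_irrefl)
qed

section \<open>Dimension of a sum of finite-dimensional subspaces\<close>

text \<open>Vector_Spaces proves these only for finite-dimensional spaces; the space of set functions
  used below is not.\<close>

context module
begin

lemma span_Int_span_Diff_independent:
  assumes "independent D" and "finite D" and "B \<subseteq> D"
  shows "span B \<inter> span (D - B) = {0}"
proof -
  have "v = 0" if v: "v \<in> span B" "v \<in> span (D - B)" for v
  proof -
    have fin: "finite B" "finite (D - B)"
      using assms finite_subset by auto
    obtain b where b: "(\<Sum>x\<in>B. b x *s x) = v"
      using v(1) span_finite[OF fin(1)] by auto
    obtain c where c: "(\<Sum>x\<in>D - B. c x *s x) = v"
      using v(2) span_finite[OF fin(2)] by auto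
    define u where "u x = (if x \<in> B then b x else - c x)" for x
    have "(\<Sum>x\<in>B. u x *s x) = v"
      unfolding b[symmetric] by (rule sum.cong) (simp_all add: u_def)
    moreover have "(\<Sum>x\<in>D - B. u x *s x) = - v"
      unfolding c[symmetric] sum_negf[symmetric]
      by (rule sum.cong) (simp_all add: u_def)
    ultimately have "(\<Sum>x\<in>D. u x *s x) = 0"
      using sum.subset_diff[OF assms(3,2), of "\<lambda>x. u x *s x"] by simp
    then have u0: "u x = 0" if "x \<in> D" for x
      using independentD[OF assms(1,2) order_refl] that by blast
    have "\<forall>x\<in>B. b x = 0"
      using u0 assms(3) unfolding u_def by (metis subsetD)
    with b show "v = 0"
      by simp
  qed
  then show ?thesis
    using span_zero by blast
qed

lemma independent_Un_span_Int_zero: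
  assumes A: "independent A" "finite A" and B: "independent B" "finite B"
    and AB: "span A \<inter> span B \<subseteq> {0}"
  shows "independent (A \<union> B)"
proof -
  have "0 \<notin> A"
    using A(1) dependent_zero by blast
  moreover have "A \<inter> B \<subseteq> span A \<inter> span B"
    using span_superset by blast
  ultimately have disj: "A \<inter> B = {}"
    using AB by blast
  have "u x = 0" if sum0: "(\<Sum>x\<in>A \<union> B. u x *s x) = 0" and x: "x \<in> A \<union> B" for u x
  proof -
    let ?a = "\<Sum>x\<in>A. u x *s x" and ?b = "\<Sum>x\<in>B. u x *s x"
    have ab: "?a = - ?b"
      using sum0 disj A(2) B(2) by (simp add: sum.union_disjoint eq_neg_iff_add_eq_0)
    have "?a \<in> span A" and "?b \<in> span B"
      by (simp_all add: span_base span_scale span_sum)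
    then have "?a \<in> span A \<inter> span B"
      unfolding ab by (simp add: span_neg)
    then have "?a = 0" and "?b = 0"
      using AB ab by auto
    then show "u x = 0"
      using x independentD[OF A(1,2) order_refl] independentD[OF B(1,2) order_refl] by blast
  qed
  then show ?thesis
    using A(2) B(2) dependent_finite by blast
qed

end

context vector_space
begin

lemma dim_span_Un_Int:
  assumes "finite X" and "finite Y"
  shows "dim (span (X \<union> Y)) + dim (span X \<inter> span Y) = dim (span X) + dim (span Y)"
proof -
  obtain B where B: "B \<subseteq> span X \<inter> span Y" "independent B" "span X \<inter> span Y \<subseteq> span B"
      "card B = dim (span X \<inter> span Y)"
    using basis_exists by blast
  have "B \<subseteq> span X" and "B \<subseteq> span Y"
    using B(1) by auto
  then obtain C D where C: "B \<subseteq> C" "C \<subseteq> span X" "independent C" "span X \<subseteq> span C"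
    and D: "B \<subseteq> D" "D \<subseteq> span Y" "independent D" "span Y \<subseteq> span D"
    using maximal_independent_subset_extend B(2) by metis
  have fin: "finite C" "finite D"
    using independent_span_bound[OF assms(1) C(3,2)] independent_span_bound[OF assms(2) D(3,2)]
    by simp_all
  have span_C: "span C = span X"
    using C(2,4) span_superset[of X] by (simp add: span_eq)
  have span_D: "span D = span Y"
    using D(2,4) span_superset[of Y] by (simp add: span_eq)
  have "span C \<inter> span (D - B) \<subseteq> span B"
    using B(3) span_C span_D span_mono[of "D - B" D] by blast
  then have CD: "span C \<inter> span (D - B) \<subseteq> {0}"
    using span_Int_span_Diff_independent[OF D(3) fin(2) D(1)] by blast
  have "independent (D - B)"
    by (rule independent_mono[OF D(3)]) auto
  then have indep: "independent (C \<union> (D - B))"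
    using independent_Un_span_Int_zero[OF C(3) fin(1) _ _ CD] fin(2) by simp
  have "0 \<notin> C"
    using C(3) dependent_zero by blast
  then have disj: "C \<inter> (D - B) = {}"
    using CD span_base by blast
  have "C \<union> (D - B) = C \<union> D"
    using C(1) by blast
  then have "span (C \<union> (D - B)) = span (X \<union> Y)"
    by (simp only: span_Un span_C span_D)
  then have "dim (span (X \<union> Y)) = card C + card (D - B)"
    using indep disj fin dim_span_eq_card_independent[OF indep] by (simp add: card_Un_disjoint)
  moreover have "dim (span X) = card C" and "dim (span Y) = card D"
    using dim_span_eq_card_independent[OF C(3)] dim_span_eq_card_independent[OF D(3)]
      span_C span_D by simp_all
  moreover have "card D = card B + card (D - B)"
    using D(1) fin(2) by (simp add: card_Diff_subset card_mono finite_subset)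
  ultimately show ?thesis
    using B(4) by simp
qed

lemma dim_subset_finite_span:
  assumes "finite W" and "T \<subseteq> span W" and "S \<subseteq> T"
  shows "dim S \<le> dim T"
proof -
  obtain B where B: "B \<subseteq> T" "independent B" "T \<subseteq> span B" "card B = dim T"
    using basis_exists by blast
  then have "finite B"
    using independent_span_bound[OF assms(1)] assms(2) by blast
  with B assms(3) show ?thesis
    using dim_le_card by (metis subset_trans)
qed

lemma dim_image_add_dim_kernel_le:
  assumes fin: "finite W"
    and add: "\<And>x y. f (x + y) = f x + f y" and scale: "\<And>c x. f (c *s x) = c *s f x"
  shows "dim (f ` span W) + dim (span W \<inter> {x. f x = 0}) \<le> dim (span W)"
proof -
  obtain B where B: "B \<subseteq> span W \<inter> {x. f x = 0}" "span W \<inter> {x. f x = 0} \<subseteq> span B"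
      "independent B" "card B = dim (span W \<inter> {x. f x = 0})"
    using basis_exists by metis
  then obtain C where C: "B \<subseteq> C" "C \<subseteq> span W" "independent C" "span W \<subseteq> span C"
    using maximal_independent_subset_extend[of B "span W"] by blast
  have fin_C: "finite C"
    using independent_span_bound[OF fin C(3)] C(2) by blast
  have f0: "f 0 = 0"
    using scale[of 0 0] by simp
  have f_sum: "f (\<Sum>v\<in>V. u v *s v) = (\<Sum>v\<in>V. u v *s f v)" if "finite V" for V u
    using that by (induction V rule: finite_induct) (simp_all add: f0 add scale)
  have "f ` span W \<subseteq> span (f ` (C - B))"
  proof
    fix y
    assume "y \<in> f ` span W"
    then obtain x where x: "x \<in> span W" "y = f x"
      by blast
    then obtain u where "x = (\<Sum>v\<in>C. u v *s v)"
      using C(4) span_finite[OF fin_C] by blast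
    with x have "y = f (\<Sum>v\<in>C. u v *s v)"
      by simp
    also have "\<dots> = (\<Sum>v\<in>C - B. u v *s f v)"
      using B(1) C(1) fin_C by (auto simp: f_sum intro!: sum.mono_neutral_right)
    also have "\<dots> \<in> span (f ` (C - B))"
      by (intro span_sum span_scale span_base) auto
    finally show "y \<in> span (f ` (C - B))" .
  qed
  then have "dim (f ` span W) \<le> card (f ` (C - B))"
    using dim_le_card fin_C by blast
  also have "\<dots> \<le> card (C - B)"
    using fin_C by (simp add: card_image_le)
  also have "\<dots> = card C - card B"
    using C(1) fin_C by (simp add: card_Diff_subset finite_subset)
  finally have "dim (f ` span W) \<le> card C - card B" .
  moreover have "span C = span W"
    using C(2,4) span_superset[of W] by (simp add: span_eq)
  then have "dim (span W) = card C"
    using dim_span_eq_card_independent[OF C(3)] by simp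
  moreover have "card B \<le> card C"
    using C(1) fin_C by (simp add: card_mono)
  ultimately show ?thesis
    using B(4) by linarith
qed

end

section \<open>The Koszul complex on set functions\<close>

definition scale_fun :: "'k::field \<Rightarrow> ('i \<Rightarrow> 'k) \<Rightarrow> 'i \<Rightarrow> 'k" where
  "scale_fun c f = (\<lambda>x. c * f x)"

lemma scale_fun_apply [simp]: "scale_fun c f x = c * f x"
  by (simp add: scale_fun_def)

interpretation fun_space: vector_space "scale_fun :: 'k::field \<Rightarrow> ('i \<Rightarrow> 'k) \<Rightarrow> 'i \<Rightarrow> 'k"
  by unfold_locales (auto simp: fun_eq_iff algebra_simps)

definition supported_on :: "'i set \<Rightarrow> ('i \<Rightarrow> 'a::zero) set" where
  "supported_on A = {g. \<forall>x. g x \<noteq> 0 \<longrightarrow> x \<in> A}"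

lemma sum_fun_apply: "(\<Sum>i\<in>A. f i) x = (\<Sum>i\<in>A. f i x)"
  by (induction A rule: infinite_finite_induct) auto

text \<open>A chain of the Koszul complex in a fixed multidegree is a function from finite sets of
  variables to the field, giving the coefficient of e_F; the monomial coefficient of e_F is
  determined by the multidegree, so the differential only involves the sets.\<close>

definition koszul_sign :: "nat set \<Rightarrow> nat \<Rightarrow> 'k::field" where
  "koszul_sign H j = (-1) ^ card {l\<in>H. l < j}"

definition koszul_coeff :: "nat set \<Rightarrow> nat set \<Rightarrow> 'k::field" where
  "koszul_coeff F G = (if \<exists>j\<in>F. G = F - {j}
      then koszul_sign F (THE j. j \<in> F \<and> G = F - {j}) else 0)"

definition unit_chain :: "nat set \<Rightarrow> nat set \<Rightarrow> 'k::field" where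
  "unit_chain F = (\<lambda>G. if G = F then 1 else 0)"

definition koszul_diff :: "nat set \<Rightarrow> (nat set \<Rightarrow> 'k::field) \<Rightarrow> nat set \<Rightarrow> 'k" where
  "koszul_diff X f = (\<lambda>H. \<Sum>F\<in>Pow X. f F * koszul_coeff F H)"

lemma kos_coeff_eq_koszul_coeff: "kos_coeff F G = koszul_coeff (set F) (set G)"
  unfolding kos_coeff_def koszul_coeff_def koszul_sign_def by simp

lemma koszul_coeff_nonzeroD: "koszul_coeff F G \<noteq> 0 \<Longrightarrow> \<exists>j\<in>F. G = F - {j}"
  unfolding koszul_coeff_def by (auto split: if_splits)

lemma koszul_coeff_remove:
  assumes "j \<in> F"
  shows "koszul_coeff F (F - {j}) = koszul_sign F j"
proof -
  have "(THE j'. j' \<in> F \<and> F - {j} = F - {j'}) = j"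
    using assms by (rule_tac the_equality) auto
  then show ?thesis
    using assms unfolding koszul_coeff_def by auto
qed

lemma koszul_sign_insert:
  assumes "finite H" and "i \<notin> H"
  shows "koszul_sign (insert i H) j = (if i < j then - koszul_sign H j else koszul_sign H j)"
proof (cases "i < j")
  case True
  then have "{l \<in> insert i H. l < j} = insert i {l\<in>H. l < j}"
    by auto
  then show ?thesis
    using assms True unfolding koszul_sign_def by simp
next
  case False
  then have "{l \<in> insert i H. l < j} = {l\<in>H. l < j}"
    by auto
  then show ?thesis
    using False unfolding koszul_sign_def by simp
qed

lemma koszul_coeff_insert:
  assumes "j \<notin> H"
  shows "koszul_coeff (insert j H) H = koszul_sign H j"
proof -
  have "koszul_coeff (insert j H) (insert j H - {j}) = koszul_sign (insert j H) j"
    by (rule koszul_coeff_remove) simp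
  moreover have "{l \<in> insert j H. l < j} = {l\<in>H. l < j}"
    by auto
  ultimately show ?thesis
    using assms unfolding koszul_sign_def by simp
qed

lemma koszul_diff_eq_sum_insert:
  assumes "finite X" and "H \<subseteq> X"
  shows "koszul_diff X f H = (\<Sum>j\<in>X - H. f (insert j H) * koszul_sign H j)"
proof -
  have "koszul_diff X f H = (\<Sum>F\<in>(\<lambda>j. insert j H) ` (X - H). f F * koszul_coeff F H)"
    unfolding koszul_diff_def
  proof (rule sum.mono_neutral_right)
    show "\<forall>F\<in>Pow X - (\<lambda>j. insert j H) ` (X - H). f F * koszul_coeff F H = 0"
      using assms(2) koszul_coeff_nonzeroD by fastforce
  qed (use assms in auto)
  also have "\<dots> = (\<Sum>j\<in>X - H. f (insert j H) * koszul_coeff (insert j H) H)"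
    by (rule sum.reindex_cong[where l = "\<lambda>j. insert j H"]) (auto simp: inj_on_def)
  also have "\<dots> = (\<Sum>j\<in>X - H. f (insert j H) * koszul_sign H j)"
    by (rule sum.cong) (auto simp: koszul_coeff_insert)
  finally show ?thesis .
qed

lemma koszul_diff_not_subset:
  assumes "\<not> H \<subseteq> X"
  shows "koszul_diff X f H = 0"
  unfolding koszul_diff_def using assms koszul_coeff_nonzeroD by (fastforce intro: sum.neutral)

lemma koszul_diff_unit_chain:
  assumes "finite X" and "F \<subseteq> X"
  shows "koszul_diff X (unit_chain F) = koszul_coeff F"
  unfolding koszul_diff_def unit_chain_def using assms
  by (intro ext) (simp add: if_distrib if_distribR cong: if_cong)

lemma koszul_diff_add: "koszul_diff X (f + g) = koszul_diff X f + koszul_diff X g"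
  unfolding koszul_diff_def by (rule ext) (simp add: sum.distrib distrib_right)

lemma koszul_diff_scale: "koszul_diff X (scale_fun c f) = scale_fun c (koszul_diff X f)"
  unfolding koszul_diff_def by (rule ext) (simp add: sum_distrib_left mult.assoc)

lemma module_hom_koszul_diff:
  "module_hom scale_fun scale_fun (koszul_diff X :: (nat set \<Rightarrow> 'k::field) \<Rightarrow> _)"
  unfolding module_hom_def module_hom_axioms_def
  by (simp add: fun_space.module_axioms koszul_diff_add koszul_diff_scale)

text \<open>The two orders of removing two elements contribute opposite signs, hence d \<circ> d = 0.\<close>
lemma koszul_sign_cancel:
  assumes "finite H" and "i \<notin> H" and "j \<notin> H" and "i \<noteq> j"
  shows "koszul_sign (insert i (insert j H)) i * koszul_sign H j
    + koszul_sign (insert i (insert j H)) j * (koszul_sign H i :: 'k::field) = 0"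
  using assms by (cases "i < j") (simp_all add: koszul_sign_insert mult.commute)

lemma koszul_diff_koszul_coeff_insert2:
  assumes X: "finite X" "H \<subseteq> X" and ij: "i \<in> X - H" "j \<in> X - H" "i \<noteq> j"
  shows "koszul_diff X (koszul_coeff (insert i (insert j H))) H = (0::'k::field)"
proof -
  let ?F = "insert i (insert j H)"
  have "?F - {i} = insert j H" and "?F - {j} = insert i H"
    using ij by auto
  then have coeff: "koszul_coeff ?F (insert j H) = koszul_sign ?F i"
      "koszul_coeff ?F (insert i H) = koszul_sign ?F j"
    using koszul_coeff_remove[of i ?F] koszul_coeff_remove[of j ?F] by simp_all
  have "koszul_diff X (koszul_coeff ?F) H
      = (\<Sum>k\<in>X - H. koszul_coeff ?F (insert k H) * (koszul_sign H k :: 'k))"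
    using koszul_diff_eq_sum_insert[OF X] .
  also have "\<dots> = (\<Sum>k\<in>{i, j}. koszul_coeff ?F (insert k H) * (koszul_sign H k :: 'k))"
  proof (rule sum.mono_neutral_right)
    show "\<forall>k\<in>X - H - {i, j}. koszul_coeff ?F (insert k H) * koszul_sign H k = (0::'k)"
    proof
      fix k
      assume "k \<in> X - H - {i, j}"
      then have "k \<notin> ?F"
        by auto
      then have "koszul_coeff ?F (insert k H) = (0::'k)"
        using koszul_coeff_nonzeroD by blast
      then show "koszul_coeff ?F (insert k H) * koszul_sign H k = (0::'k)"
        by simp
    qed
  qed (use X ij in auto)
  also have "\<dots> = koszul_sign ?F i * koszul_sign H j + koszul_sign ?F j * koszul_sign H i"
    using ij by (simp add: coeff add.commute)
  also have "\<dots> = 0"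
    using X ij finite_subset by (intro koszul_sign_cancel) auto
  finally show ?thesis .
qed

lemma koszul_diff_koszul_coeff:
  assumes "finite X" and "F \<subseteq> X"
  shows "koszul_diff X (koszul_coeff F) = (0 :: nat set \<Rightarrow> 'k::field)"
proof
  fix H
  show "koszul_diff X (koszul_coeff F) H = (0 :: nat set \<Rightarrow> 'k) H"
  proof (cases "H \<subseteq> X \<and> (\<exists>j\<in>X - H. koszul_coeff F (insert j H) \<noteq> (0::'k))")
    case True
    then obtain j where H: "H \<subseteq> X" and j: "j \<in> X - H" "koszul_coeff F (insert j H) \<noteq> (0::'k)"
      by blast
    then obtain i where "i \<in> F" and "insert j H = F - {i}"
      using koszul_coeff_nonzeroD by blast
    then have "F = insert i (insert j H)" and "i \<in> X - H" and "i \<noteq> j"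
      using assms(2) by auto
    then show ?thesis
      using koszul_diff_koszul_coeff_insert2[OF assms(1) H _ j(1)] by simp
  next
    case False
    show ?thesis
    proof (cases "H \<subseteq> X")
      case True
      with False have "\<forall>j\<in>X - H. koszul_coeff F (insert j H) = (0::'k)"
        by blast
      then show ?thesis
        by (simp add: koszul_diff_eq_sum_insert[OF assms(1) True])
    qed (simp add: koszul_diff_not_subset)
  qed
qed

text \<open>Right multiplication by e_p.\<close>
definition koszul_homotopy :: "nat \<Rightarrow> (nat set \<Rightarrow> 'k::field) \<Rightarrow> nat set \<Rightarrow> 'k" where
  "koszul_homotopy p f = (\<lambda>G. if p \<in> G then (-1) ^ (card G - 1) * f (G - {p}) else 0)"

lemma koszul_sign_below:
  assumes "p \<notin> H" and "\<forall>x\<in>H. x \<le> p"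
  shows "koszul_sign H p = (-1) ^ card H"
proof -
  have "{l\<in>H. l < p} = H"
    using assms by (auto simp: le_less)
  then show ?thesis
    unfolding koszul_sign_def by simp
qed

lemma koszul_homotopy_identity_not_mem:
  assumes X: "finite X" "p \<in> X" and H: "H \<subseteq> X" "p \<notin> H"
    and supp: "\<And>F. f F \<noteq> 0 \<Longrightarrow> F \<subseteq> X \<and> (\<forall>x\<in>F. x \<le> p)"
  shows "koszul_diff X (koszul_homotopy p f) H + koszul_homotopy p (koszul_diff X f) H = (f H :: 'k::field)"
proof -
  have "finite H"
    using X(1) H(1) finite_subset by blast
  have "koszul_diff X (koszul_homotopy p f) H
      = (\<Sum>j\<in>X - H. koszul_homotopy p f (insert j H) * koszul_sign H j)"
    using koszul_diff_eq_sum_insert[OF X(1) H(1)] .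
  also have "\<dots> = (\<Sum>j\<in>{p}. koszul_homotopy p f (insert j H) * koszul_sign H j)"
  proof (rule sum.mono_neutral_right)
    show "\<forall>j\<in>X - H - {p}. koszul_homotopy p f (insert j H) * koszul_sign H j = 0"
      using H(2) by (simp add: koszul_homotopy_def)
  qed (use X H in auto)
  also have "\<dots> = (-1) ^ card H * f H * koszul_sign H p"
  proof -
    have "insert p H - {p} = H"
      using H(2) by simp
    then have "koszul_homotopy p f (insert p H) = (-1) ^ card H * f H"
      using H(2) \<open>finite H\<close> unfolding koszul_homotopy_def by simp
    then show ?thesis
      by simp
  qed
  also have "\<dots> = f H"
  proof (cases "f H = 0")
    case False
    have sign: "koszul_sign H p = (-1) ^ card H"
      using supp[OF False] H(2) by (intro koszul_sign_below) auto
    show ?thesis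
      by (subst mult.commute) (simp add: sign)
  qed simp
  moreover have "koszul_homotopy p (koszul_diff X f) H = 0"
    using H(2) unfolding koszul_homotopy_def by simp
  ultimately show ?thesis
    by simp
qed

lemma koszul_diff_koszul_homotopy_mem:
  assumes X: "finite X" and H: "H \<subseteq> X" "p \<in> H"
  shows "koszul_diff X (koszul_homotopy p f) H
    = - ((-1) ^ card (H - {p}) * (\<Sum>j\<in>X - H. f (insert j (H - {p})) * koszul_sign H j))"
proof -
  have "finite H"
    using X H(1) finite_subset by blast
  moreover have "card H > 0"
    using H(2) \<open>finite H\<close> card_gt_0_iff by blast
  ultimately have card_H: "card H = Suc (card (H - {p}))"
    using H(2) by (simp add: card_Diff_singleton)
  have "koszul_diff X (koszul_homotopy p f) H
      = (\<Sum>j\<in>X - H. koszul_homotopy p f (insert j H) * koszul_sign H j)"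
    using koszul_diff_eq_sum_insert[OF X H(1)] .
  also have "\<dots> = (\<Sum>j\<in>X - H. (-1) ^ Suc (card (H - {p})) * (f (insert j (H - {p})) * koszul_sign H j))"
  proof (rule sum.cong[OF refl])
    fix j
    assume j: "j \<in> X - H"
    then have "card (insert j H) - 1 = Suc (card (H - {p}))" and "insert j H - {p} = insert j (H - {p})"
      using \<open>finite H\<close> card_H H(2) by auto
    then show "koszul_homotopy p f (insert j H) * koszul_sign H j
        = (-1) ^ Suc (card (H - {p})) * (f (insert j (H - {p})) * koszul_sign H j)"
      using H(2) by (simp add: koszul_homotopy_def)
  qed
  finally show ?thesis
    by (simp add: sum_distrib_left sum_negf)
qed

lemma koszul_homotopy_identity_mem:
  assumes X: "finite X" "p \<in> X" and H: "H \<subseteq> X" "p \<in> H"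
    and supp: "\<And>F. f F \<noteq> 0 \<Longrightarrow> F \<subseteq> X \<and> (\<forall>x\<in>F. x \<le> p)"
  shows "koszul_diff X (koszul_homotopy p f) H + koszul_homotopy p (koszul_diff X f) H = (f H :: 'k::field)"
proof -
  define H' where "H' = H - {p}"
  have "finite H"
    using X(1) H(1) finite_subset by blast
  moreover have "card H > 0"
    using H(2) \<open>finite H\<close> card_gt_0_iff by blast
  ultimately have card_H: "card H = Suc (card H')"
    using H(2) unfolding H'_def by (simp add: card_Diff_singleton)
  have H': "H' \<subseteq> X" "p \<notin> H'" "insert p H' = H" "finite H'"
    using H \<open>finite H\<close> unfolding H'_def by auto
  let ?S = "\<Sum>j\<in>X - H. f (insert j H') * koszul_sign H j"
  have hd: "koszul_diff X (koszul_homotopy p f) H = - ((-1) ^ card H' * ?S)"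
    unfolding H'_def by (rule koszul_diff_koszul_homotopy_mem[OF X(1) H])
  have "X - H' = insert p (X - H)"
    using H X(2) unfolding H'_def by auto
  then have "koszul_diff X f H' = f H * koszul_sign H' p
      + (\<Sum>j\<in>X - H. f (insert j H') * koszul_sign H' j)"
    using koszul_diff_eq_sum_insert[OF X(1) H'(1)] X(1) H'(3) H(2) by simp
  also have "(\<Sum>j\<in>X - H. f (insert j H') * koszul_sign H' j) = ?S"
  proof (rule sum.cong[OF refl])
    fix j
    assume j: "j \<in> X - H"
    show "f (insert j H') * koszul_sign H' j = f (insert j H') * koszul_sign H j"
    proof (cases "f (insert j H') = 0")
      case False
      then have "j < p"
        using supp j H(2) by (metis insertI1 le_neq_implies_less DiffD2)
      then have "koszul_sign H j = (koszul_sign H' j :: 'k)"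
        using koszul_sign_insert[OF H'(4,2), of j] H'(3) by simp
      then show ?thesis
        by simp
    qed simp
  qed
  finally have dh: "koszul_homotopy p (koszul_diff X f) H
      = (-1) ^ card H' * (f H * koszul_sign H' p + ?S)"
    using H(2) card_H by (simp add: koszul_homotopy_def H'_def)
  have "(-1) ^ card H' * (f H * koszul_sign H' p) = f H"
  proof (cases "f H = 0")
    case False
    have sign: "koszul_sign H' p = (-1) ^ card H'"
      using supp[OF False] H'(2,3) by (intro koszul_sign_below) auto
    show ?thesis
      by (subst mult.commute[of "f H"]) (simp add: sign)
  qed simp
  then show ?thesis
    using hd dh by (simp add: algebra_simps)
qed

lemma koszul_homotopy_identity:
  assumes X: "finite X" "p \<in> X"
    and supp: "\<And>F. f F \<noteq> 0 \<Longrightarrow> F \<subseteq> X \<and> (\<forall>x\<in>F. x \<le> p)"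
  shows "koszul_diff X (koszul_homotopy p f) H + koszul_homotopy p (koszul_diff X f) H = (f H :: 'k::field)"
proof (cases "H \<subseteq> X")
  case True
  then show ?thesis
    using koszul_homotopy_identity_mem[OF X True _ supp]
      koszul_homotopy_identity_not_mem[OF X True _ supp] by blast
next
  case False
  moreover have "\<not> H - {p} \<subseteq> X" if "p \<in> H"
    using False X(2) that by auto
  ultimately show ?thesis
    using supp[of H] by (auto simp: koszul_homotopy_def koszul_diff_not_subset)
qed

lemma span_unit_chain:
  assumes "finite A"
  shows "fun_space.span (unit_chain ` A) = (supported_on A :: (nat set \<Rightarrow> 'k::field) set)"
    (is "_ = ?T")
proof
  have "fun_space.subspace ?T"
    unfolding fun_space.subspace_def supported_on_def by auto (metis add_0)
  moreover have "unit_chain ` A \<subseteq> ?T"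
    unfolding unit_chain_def supported_on_def by (auto split: if_splits)
  ultimately show "fun_space.span (unit_chain ` A) \<subseteq> ?T"
    using fun_space.span_minimal by blast
next
  show "?T \<subseteq> fun_space.span (unit_chain ` A)"
  proof
    fix f :: "nat set \<Rightarrow> 'k"
    assume f: "f \<in> ?T"
    have "f = (\<Sum>F\<in>A. scale_fun (f F) (unit_chain F))"
    proof
      fix G
      show "f G = (\<Sum>F\<in>A. scale_fun (f F) (unit_chain F)) G"
        using assms f unfolding unit_chain_def sum_fun_apply supported_on_def
        by (simp add: if_distrib if_distribR cong: if_cong) blast
    qed
    also have "\<dots> \<in> fun_space.span (unit_chain ` A)"
      by (intro fun_space.span_sum fun_space.span_scale fun_space.span_base) auto
    finally show "f \<in> fun_space.span (unit_chain ` A)" .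
  qed
qed

lemma dim_span_unit_chain:
  assumes "finite A"
  shows "fun_space.dim (fun_space.span (unit_chain ` A) :: (nat set \<Rightarrow> 'k::field) set) = card A"
proof -
  have inj: "inj_on (unit_chain :: nat set \<Rightarrow> nat set \<Rightarrow> 'k) A"
    unfolding inj_on_def unit_chain_def by (metis zero_neq_one)
  have "fun_space.independent (unit_chain ` A :: (nat set \<Rightarrow> 'k) set)"
  proof (rule fun_space.independent_if_scalars_zero)
    fix u :: "(nat set \<Rightarrow> 'k) \<Rightarrow> 'k" and v :: "nat set \<Rightarrow> 'k"
    assume sum0: "(\<Sum>v\<in>unit_chain ` A. scale_fun (u v) v) = 0" and v: "v \<in> unit_chain ` A"
    then obtain F where F: "F \<in> A" "v = unit_chain F"
      by auto
    have "(\<Sum>v\<in>unit_chain ` A. scale_fun (u v) v) F = (\<Sum>G\<in>A. u (unit_chain G) * unit_chain G F)"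
      using sum.reindex[OF inj, of "\<lambda>v. u v * v F"] by (simp add: sum_fun_apply)
    also have "\<dots> = (\<Sum>G\<in>A. if G = F then u (unit_chain F) else 0)"
      by (rule sum.cong) (auto simp: unit_chain_def)
    also have "\<dots> = u (unit_chain F)"
      using assms F by simp
    finally show "u v = 0"
      using sum0 F by simp
  qed (use assms in simp)
  then show ?thesis
    using fun_space.dim_span_eq_card_independent card_image[OF inj] by metis
qed

section \<open>Ranks of coordinate matrices\<close>

definition coord_vec :: "'i list \<Rightarrow> ('i \<Rightarrow> 'a) \<Rightarrow> 'a vec" where
  "coord_vec K g = vec (length K) (\<lambda>r. g (K ! r))"

lemma coord_vec_index [simp]: "r < length K \<Longrightarrow> coord_vec K g $ r = g (K ! r)"
  by (simp add: coord_vec_def)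

lemma coord_vec_carrier [simp]: "coord_vec K g \<in> carrier_vec (length K)"
  by (simp add: coord_vec_def)

lemma inj_on_coord_vec:
  "inj_on (coord_vec K) (supported_on (set K) :: ('i \<Rightarrow> 'a::zero) set)"
proof (rule inj_onI)
  fix g h :: "'i \<Rightarrow> 'a"
  assume g: "g \<in> supported_on (set K)" and h: "h \<in> supported_on (set K)"
    and eq: "coord_vec K g = coord_vec K h"
  show "g = h"
  proof
    fix x
    show "g x = h x"
    proof (cases "x \<in> set K")
      case True
      then obtain r where "r < length K" "x = K ! r"
        by (auto simp: in_set_conv_nth)
      then show ?thesis
        using eq coord_vec_index[of r K g] coord_vec_index[of r K h] by simp
    next
      case False
      then have "g x = 0" and "h x = 0"
        using g h unfolding supported_on_def by blast+
      then show ?thesis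
        by simp
    qed
  qed
qed

context vec_space
begin

lemma lin_indpt_coord_vec:
  assumes "fun_space.independent S" and "finite S" and "S \<subseteq> supported_on (set K)"
    and "n = length K"
  shows "lin_indpt (coord_vec K ` S)"
proof
  assume "lin_dep (coord_vec K ` S)"
  then obtain A a v where A: "finite A" "A \<subseteq> coord_vec K ` S" "lincomb a A = 0\<^sub>v n" "v \<in> A"
      "a v \<noteq> 0"
    unfolding lin_dep_def by blast
  define A0 where "A0 = {g\<in>S. coord_vec K g \<in> A}"
  have A0: "A0 \<subseteq> S" "finite A0"
    using assms(2) unfolding A0_def by auto
  have A_eq: "A = coord_vec K ` A0"
    using A(2) unfolding A0_def by blast
  have inj: "inj_on (coord_vec K) A0"
    using inj_on_coord_vec A0(1) assms(3) inj_on_subset by blast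
  have A_carrier: "A \<subseteq> carrier_vec n"
    using A_eq assms(4) by auto
  have "(\<Sum>g\<in>A0. scale_fun (a (coord_vec K g)) g) = 0"
  proof
    fix x
    have "(\<Sum>g\<in>A0. scale_fun (a (coord_vec K g)) g) x = (\<Sum>g\<in>A0. a (coord_vec K g) * g x)"
      by (simp add: sum_fun_apply)
    also have "\<dots> = 0"
    proof (cases "x \<in> set K")
      case True
      then obtain r where r: "r < n" "x = K ! r"
        using assms(4) by (auto simp: in_set_conv_nth)
      have "(\<Sum>g\<in>A0. a (coord_vec K g) * g x) = (\<Sum>g\<in>A0. a (coord_vec K g) * coord_vec K g $ r)"
        using r assms(4) by simp
      also have "\<dots> = (\<Sum>w\<in>A. a w * w $ r)"
        unfolding A_eq using sum.reindex[OF inj, of "\<lambda>w. a w * w $ r"] by simp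
      also have "\<dots> = lincomb a A $ r"
        using lincomb_index[OF r(1) A_carrier] by simp
      finally show ?thesis
        using A(3) r(1) by simp
    next
      case False
      then have "g x = 0" if "g \<in> A0" for g
        using that A0(1) assms(3) unfolding supported_on_def by blast
      then show ?thesis
        by simp
    qed
    finally show "(\<Sum>g\<in>A0. scale_fun (a (coord_vec K g)) g) x = 0 x"
      by simp
  qed
  then have "a (coord_vec K g) = 0" if "g \<in> A0" for g
    using fun_space.independentD[OF assms(1) A0(2,1), where u = "\<lambda>g. a (coord_vec K g)"] that
    by blast
  then show False
    using A(4,5) A_eq by blast
qed

lemma coord_vec_in_span:
  assumes "g \<in> fun_space.span S" and "finite S" and "S \<subseteq> supported_on (set K)"
    and "n = length K"
  shows "coord_vec K g \<in> span (coord_vec K ` S)"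
proof -
  obtain u where u: "g = (\<Sum>h\<in>S. scale_fun (u h) h)"
    using assms(1) fun_space.span_finite[OF assms(2)] by auto
  have inj: "inj_on (coord_vec K) S"
    using inj_on_coord_vec assms(3) inj_on_subset by blast
  define b where "b w = u (the_inv_into S (coord_vec K) w)" for w
  have carrier: "coord_vec K ` S \<subseteq> carrier_vec n"
    using assms(4) by auto
  have "coord_vec K g = lincomb b (coord_vec K ` S)"
  proof (rule eq_vecI)
    have "dim_vec (lincomb b (coord_vec K ` S)) = n"
      using lincomb_closed[OF carrier] by (simp add: carrier_vecD)
    then show "dim_vec (coord_vec K g) = dim_vec (lincomb b (coord_vec K ` S))"
      using assms(4) by (simp add: coord_vec_def)
    fix r
    assume "r < dim_vec (lincomb b (coord_vec K ` S))"
    with \<open>dim_vec (lincomb b (coord_vec K ` S)) = n\<close> have r: "r < n"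
      by simp
    have "lincomb b (coord_vec K ` S) $ r = (\<Sum>w\<in>coord_vec K ` S. b w * w $ r)"
      using lincomb_index[OF r carrier] .
    also have "\<dots> = (\<Sum>h\<in>S. b (coord_vec K h) * coord_vec K h $ r)"
      using sum.reindex[OF inj] by simp
    also have "\<dots> = (\<Sum>h\<in>S. u h * h (K ! r))"
      by (rule sum.cong[OF refl]) (use r assms(4) in \<open>simp add: b_def the_inv_into_f_f[OF inj]\<close>)
    also have "\<dots> = coord_vec K g $ r"
      using r assms(4) unfolding u by (simp add: sum_fun_apply)
    finally show "coord_vec K g $ r = lincomb b (coord_vec K ` S) $ r"
      by simp
  qed
  then show ?thesis
    using assms(2) by (intro in_spanI) auto
qed

lemma cols_coord_mat:
  assumes "n = length K"
  shows "cols (mat n (length gs) (\<lambda>(r, c). (gs ! c) (K ! r))) = map (coord_vec K) gs"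
  using assms by (intro nth_equalityI) (auto simp: coord_vec_def)

lemma maximal_coord_vec_basis:
  assumes S: "S \<subseteq> G" "fun_space.independent S" "G \<subseteq> fun_space.span S" "finite S"
    and supp: "S \<subseteq> supported_on (set K)" and "n = length K"
  shows "maximal (coord_vec K ` S) (\<lambda>T. T \<subseteq> coord_vec K ` G \<and> lin_indpt T)"
  unfolding maximal_def
proof (intro conjI allI impI)
  show indep: "lin_indpt (coord_vec K ` S)"
    using lin_indpt_coord_vec S(2,4) supp assms(6) .
  show "coord_vec K ` S \<subseteq> coord_vec K ` G"
    using S(1) by blast
  fix B
  assume B: "coord_vec K ` S \<subseteq> B \<and> B \<subseteq> coord_vec K ` G \<and> lin_indpt B"
  show "B = coord_vec K ` S"
  proof (rule ccontr)
    assume "B \<noteq> coord_vec K ` S"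
    then obtain w where w: "w \<in> B" "w \<notin> coord_vec K ` S"
      using B by blast
    then obtain g where g: "g \<in> G" "coord_vec K g \<in> B" "coord_vec K g \<notin> coord_vec K ` S"
      using B by auto
    have "coord_vec K g \<in> span (coord_vec K ` S)"
      using S(3) g(1) by (intro coord_vec_in_span[OF _ S(4) supp assms(6)]) blast
    moreover have "coord_vec K ` S \<subseteq> carrier_vec n"
      using assms(6) by auto
    ultimately have "lin_dep (coord_vec K ` S \<union> {coord_vec K g})"
      using lin_dep_iff_in_span[OF _ indep _ g(3)] assms(6) by simp
    moreover have "coord_vec K ` S \<union> {coord_vec K g} \<subseteq> B"
      using B g(2) by blast
    ultimately have "lin_dep B"
      by (rule supset_ld_is_ld)
    with B show False
      by blast
  qed
qed

lemma rank_coord_mat_eq_dim: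
  assumes "n = length K" and "set gs \<subseteq> supported_on (set K)"
  shows "rank (mat n (length gs) (\<lambda>(r, c). (gs ! c) (K ! r))) = fun_space.dim (set gs)"
proof -
  obtain S where S: "S \<subseteq> set gs" "fun_space.independent S" "set gs \<subseteq> fun_space.span S"
      "card S = fun_space.dim (set gs)"
    using fun_space.basis_exists by blast
  have fin: "finite S"
    using S(1) finite_subset by blast
  have supp: "S \<subseteq> supported_on (set K)"
    using S(1) assms(2) by blast
  have "set (cols (mat n (length gs) (\<lambda>(r, c). (gs ! c) (K ! r)))) = coord_vec K ` set gs"
    using cols_coord_mat[OF assms(1), of gs] by simp
  then have "rank (mat n (length gs) (\<lambda>(r, c). (gs ! c) (K ! r))) = card (coord_vec K ` S)"
    using maximal_coord_vec_basis[OF S(1-3) fin supp assms(1)]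
    by (intro rank_card_indpt[OF mat_carrier]) simp
  also have "\<dots> = card S"
    using inj_on_coord_vec supp by (intro card_image) (rule inj_on_subset)
  finally show ?thesis
    using S(4) by simp
qed

end

section \<open>The Koszul complex of a monomial ideal\<close>

definition kos_sets :: "nat \<Rightarrow> (nat \<Rightarrow> nat) set \<Rightarrow> (nat \<Rightarrow> nat) \<Rightarrow> nat \<Rightarrow> nat set set" where
  "kos_sets n I \<alpha> i = {F. F \<subseteq> {0..<n} \<and> card F = i \<and> (\<forall>l\<in>F. 1 \<le> \<alpha> l)
     \<and> (\<lambda>l. if l \<in> F then \<alpha> l - 1 else \<alpha> l) \<in> I}"

definition kos_chains :: "nat \<Rightarrow> (nat \<Rightarrow> nat) set \<Rightarrow> (nat \<Rightarrow> nat) \<Rightarrow> nat \<Rightarrow> (nat set \<Rightarrow> 'k::field) set"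
  where "kos_chains n I \<alpha> i = fun_space.span (unit_chain ` kos_sets n I \<alpha> i)"

text \<open>The image of the chains of degree i, i.e. the boundaries of degree i - 1.\<close>
definition kos_boundaries ::
    "nat \<Rightarrow> (nat \<Rightarrow> nat) set \<Rightarrow> (nat \<Rightarrow> nat) \<Rightarrow> nat \<Rightarrow> (nat set \<Rightarrow> 'k::field) set"
  where "kos_boundaries n I \<alpha> i = fun_space.span (koszul_coeff ` kos_sets n I \<alpha> i)"

lemma finite_kos_sets: "finite (kos_sets n I \<alpha> i)"
  by (rule finite_subset[of _ "Pow {0..<n}"]) (auto simp: kos_sets_def)

lemma kos_sets_Un: "kos_sets n (I \<union> J) \<alpha> i = kos_sets n I \<alpha> i \<union> kos_sets n J \<alpha> i"
  unfolding kos_sets_def by auto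

lemma kos_sets_Int: "kos_sets n (I \<inter> J) \<alpha> i = kos_sets n I \<alpha> i \<inter> kos_sets n J \<alpha> i"
  unfolding kos_sets_def by auto

lemma set_kos_basis: "set ` set (kos_basis n I \<alpha> i) = kos_sets n I \<alpha> i"
proof -
  have "set ` {xs \<in> set (subseqs [0..<n]). length xs = i \<and> kos_ok I \<alpha> xs} = kos_sets n I \<alpha> i"
  proof (intro equalityI subsetI)
    fix F
    assume "F \<in> set ` {xs \<in> set (subseqs [0..<n]). length xs = i \<and> kos_ok I \<alpha> xs}"
    then obtain xs where xs: "xs \<in> set (subseqs [0..<n])" "length xs = i" "kos_ok I \<alpha> xs" "F = set xs"
      by blast
    then have "card F = i"
      using subseqs_distinctD[OF xs(1)] distinct_card by fastforce
    moreover have "F \<subseteq> {0..<n}"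
      using xs(1,4) subseqs_powset[of "[0..<n]"] by auto
    ultimately show "F \<in> kos_sets n I \<alpha> i"
      using xs(3,4) unfolding kos_sets_def kos_ok_def by auto
  next
    fix F
    assume F: "F \<in> kos_sets n I \<alpha> i"
    then have "F \<in> Pow (set [0..<n])"
      unfolding kos_sets_def by auto
    then obtain xs where xs: "xs \<in> set (subseqs [0..<n])" "F = set xs"
      using subseqs_powset[of "[0..<n]"] by (metis imageE)
    moreover have "length xs = i"
      using F xs subseqs_distinctD[OF xs(1)] distinct_card unfolding kos_sets_def by fastforce
    ultimately show "F \<in> set ` {xs \<in> set (subseqs [0..<n]). length xs = i \<and> kos_ok I \<alpha> xs}"
      using F unfolding kos_sets_def kos_ok_def by auto
  qed
  then show ?thesis
    unfolding kos_basis_def by simp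
qed

lemma distinct_map_set_kos_basis: "distinct (map set (kos_basis n I \<alpha> i))"
  unfolding kos_basis_def by (rule distinct_map_filter) (simp add: distinct_set_subseqs)

lemma length_kos_basis: "length (kos_basis n I \<alpha> i) = card (kos_sets n I \<alpha> i)"
  using distinct_card[OF distinct_map_set_kos_basis] set_kos_basis by (metis length_map set_map)

lemma kos_sets_Diff:
  assumes I: "monomial_ideal n I" and F: "F \<in> kos_sets n I \<alpha> i" and j: "j \<in> F"
  shows "F - {j} \<in> kos_sets n I \<alpha> (i - 1)"
proof -
  let ?u = "\<lambda>l. if l \<in> F then \<alpha> l - 1 else \<alpha> l"
  let ?v = "\<lambda>l. if l \<in> F - {j} then \<alpha> l - 1 else \<alpha> l"
  have F_n: "F \<subseteq> {0..<n}" and u: "?u \<in> I"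
    using F unfolding kos_sets_def by auto
  then have u_mons: "?u \<in> mons n"
    using I unfolding monomial_ideal_def by blast
  have "?v \<in> mons n"
    unfolding mons_def
  proof (intro CollectI allI impI)
    fix l
    assume "n \<le> l"
    then have "l \<notin> F"
      using F_n by auto
    have "\<forall>l\<ge>n. ?u l = 0"
      using u_mons unfolding mons_def by (rule CollectD)
    then have "?u l = 0"
      using \<open>n \<le> l\<close> by blast
    with \<open>l \<notin> F\<close> show "?v l = 0"
      by simp
  qed
  moreover have "mdvd ?u ?v"
    unfolding mdvd_def by auto
  ultimately have "?v \<in> I"
    using I u unfolding monomial_ideal_def by blast
  moreover have "finite F"
    using F_n finite_subset by blast
  ultimately show ?thesis
    using F j unfolding kos_sets_def by auto
qed

lemma koszul_coeff_kos_sets: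
  assumes "monomial_ideal n I" and "F \<in> kos_sets n I \<alpha> i" and "koszul_coeff F G \<noteq> 0"
  shows "G \<in> kos_sets n I \<alpha> (i - 1)"
  using koszul_coeff_nonzeroD[OF assms(3)] kos_sets_Diff[OF assms(1,2)] by blast

lemma kos_boundaries_0: "kos_boundaries n I \<alpha> 0 = ({0} :: (nat set \<Rightarrow> 'k::field) set)"
proof -
  have "kos_sets n I \<alpha> 0 \<subseteq> {{}}"
    unfolding kos_sets_def using finite_subset by fastforce
  moreover have "koszul_coeff {} = (0 :: nat set \<Rightarrow> 'k)"
    unfolding koszul_coeff_def by auto
  ultimately have "koszul_coeff ` kos_sets n I \<alpha> 0 \<subseteq> {0 :: nat set \<Rightarrow> 'k}"
    by blast
  then have "kos_boundaries n I \<alpha> 0 \<subseteq> fun_space.span {0 :: nat set \<Rightarrow> 'k}"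
    unfolding kos_boundaries_def by (rule fun_space.span_mono)
  then show ?thesis
    unfolding kos_boundaries_def using fun_space.span_zero by auto
qed

lemma dim_zero_space: "fun_space.dim ({0} :: ('i \<Rightarrow> 'k::field) set) = 0"
  using fun_space.dim_span_eq_card_independent[OF fun_space.independent_empty] by simp

lemma kos_rank_eq_dim:
  assumes "monomial_ideal n I"
  shows "kos_rank TYPE('k::field) n I \<alpha> i = fun_space.dim (kos_boundaries n I \<alpha> i :: (nat set \<Rightarrow> 'k) set)"
proof (cases "i = 0")
  case True
  then show ?thesis
    by (simp add: kos_rank_def kos_boundaries_0 dim_zero_space)
next
  case False
  let ?R = "kos_basis n I \<alpha> (i - 1)" and ?C = "kos_basis n I \<alpha> i"
  let ?gs = "map (\<lambda>c. koszul_coeff (set c) :: nat set \<Rightarrow> 'k) ?C"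
  have mat: "kos_mat TYPE('k) n I \<alpha> i
      = mat (length ?R) (length ?gs) (\<lambda>(r, c). (?gs ! c) (map set ?R ! r))"
    unfolding kos_mat_def Let_def by (rule eq_matI) (simp_all add: kos_coeff_eq_koszul_coeff)
  have supp: "set ?gs \<subseteq> supported_on (set (map set ?R))"
    using koszul_coeff_kos_sets[OF assms] set_kos_basis
    unfolding supported_on_def by (fastforce simp: image_iff)
  have gs: "set ?gs = koszul_coeff ` kos_sets n I \<alpha> i"
    using set_kos_basis by (metis image_image set_map)
  have "kos_rank TYPE('k) n I \<alpha> i = vec_space.rank (length ?R) (kos_mat TYPE('k) n I \<alpha> i)"
    using False unfolding kos_rank_def by simp
  also have "\<dots> = fun_space.dim (koszul_coeff ` kos_sets n I \<alpha> i :: (nat set \<Rightarrow> 'k) set)"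
    unfolding mat gs[symmetric] by (rule vec_space.rank_coord_mat_eq_dim[OF _ supp]) simp
  also have "\<dots> = fun_space.dim (kos_boundaries n I \<alpha> i :: (nat set \<Rightarrow> 'k) set)"
    unfolding kos_boundaries_def by (rule fun_space.dim_span[symmetric])
  finally show ?thesis .
qed

lemma kos_boundaries_eq_image:
  "kos_boundaries n I \<alpha> i = koszul_diff {0..<n} ` (kos_chains n I \<alpha> i :: (nat set \<Rightarrow> 'k::field) set)"
proof -
  have "koszul_diff {0..<n} ` unit_chain ` kos_sets n I \<alpha> i
      = (koszul_coeff ` kos_sets n I \<alpha> i :: (nat set \<Rightarrow> 'k) set)"
    unfolding image_image using koszul_diff_unit_chain
    by (intro image_cong) (auto simp: kos_sets_def)
  then show ?thesis
    unfolding kos_boundaries_def kos_chains_def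
    using module_hom.span_image[OF module_hom_koszul_diff] by metis
qed

lemma kos_chains_eq: "kos_chains n I \<alpha> i = supported_on (kos_sets n I \<alpha> i)"
  unfolding kos_chains_def by (rule span_unit_chain[OF finite_kos_sets])

lemma kos_boundaries_subset_chains:
  assumes "monomial_ideal n I"
  shows "kos_boundaries n I \<alpha> (Suc i) \<subseteq> (kos_chains n I \<alpha> i :: (nat set \<Rightarrow> 'k::field) set)"
proof -
  have "koszul_coeff ` kos_sets n I \<alpha> (Suc i) \<subseteq> (kos_chains n I \<alpha> i :: (nat set \<Rightarrow> 'k) set)"
  proof
    fix f :: "nat set \<Rightarrow> 'k"
    assume "f \<in> koszul_coeff ` kos_sets n I \<alpha> (Suc i)"
    then obtain F where "F \<in> kos_sets n I \<alpha> (Suc i)" and "f = koszul_coeff F"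
      by blast
    then show "f \<in> kos_chains n I \<alpha> i"
      unfolding kos_chains_eq supported_on_def using koszul_coeff_kos_sets[OF assms] by fastforce
  qed
  then show ?thesis
    unfolding kos_boundaries_def kos_chains_def
    by (intro fun_space.span_minimal fun_space.subspace_span)
qed

lemma koszul_diff_kos_boundaries:
  assumes "x \<in> (kos_boundaries n I \<alpha> i :: (nat set \<Rightarrow> 'k::field) set)"
  shows "koszul_diff {0..<n} x = 0"
proof -
  have "koszul_coeff ` kos_sets n I \<alpha> i \<subseteq> {x :: nat set \<Rightarrow> 'k. koszul_diff {0..<n} x = 0}"
    using koszul_diff_koszul_coeff by (auto simp: kos_sets_def)
  then have "kos_boundaries n I \<alpha> i \<subseteq> {x :: nat set \<Rightarrow> 'k. koszul_diff {0..<n} x = 0}"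
    unfolding kos_boundaries_def
    using fun_space.span_minimal module_hom.subspace_kernel[OF module_hom_koszul_diff] by blast
  with assms show ?thesis
    by blast
qed

section \<open>Betti numbers of a union\<close>

lemma dim_kos_boundaries_add_le:
  assumes "monomial_ideal n I"
  shows "fun_space.dim (kos_boundaries n I \<alpha> i :: (nat set \<Rightarrow> 'k::field) set)
      + fun_space.dim (kos_boundaries n I \<alpha> (Suc i) :: (nat set \<Rightarrow> 'k) set)
    \<le> card (kos_sets n I \<alpha> i)"
proof -
  let ?C = "kos_chains n I \<alpha> i :: (nat set \<Rightarrow> 'k) set"
  let ?d = "koszul_diff {0..<n} :: (nat set \<Rightarrow> 'k) \<Rightarrow> _"
  have "fun_space.dim (?d ` ?C) + fun_space.dim (?C \<inter> {x. ?d x = 0}) \<le> fun_space.dim ?C"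
    unfolding kos_chains_def
    by (rule fun_space.dim_image_add_dim_kernel_le)
      (simp_all add: finite_kos_sets koszul_diff_add koszul_diff_scale)
  moreover have "kos_boundaries n I \<alpha> (Suc i) \<subseteq> ?C \<inter> {x. ?d x = 0}"
    using kos_boundaries_subset_chains[OF assms] koszul_diff_kos_boundaries by blast
  then have "fun_space.dim (kos_boundaries n I \<alpha> (Suc i) :: (nat set \<Rightarrow> 'k) set)
      \<le> fun_space.dim (?C \<inter> {x. ?d x = 0})"
    by (intro fun_space.dim_subset_finite_span[of "unit_chain ` kos_sets n I \<alpha> i"])
      (auto simp: kos_chains_def finite_kos_sets)
  moreover have "fun_space.dim ?C = card (kos_sets n I \<alpha> i)"
    unfolding kos_chains_def by (rule dim_span_unit_chain[OF finite_kos_sets])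
  ultimately show ?thesis
    unfolding kos_boundaries_eq_image[of n I \<alpha> i] by linarith
qed

lemma multibetti_eq:
  assumes "monomial_ideal n I"
  shows "int (multibetti TYPE('k::field) n I i \<alpha>) = int (card (kos_sets n I \<alpha> i))
     - int (fun_space.dim (kos_boundaries n I \<alpha> i :: (nat set \<Rightarrow> 'k) set))
     - int (fun_space.dim (kos_boundaries n I \<alpha> (Suc i) :: (nat set \<Rightarrow> 'k) set))"
proof -
  have diff: "int (a - (b + c)) = int a - int b - int c" if "b + c \<le> a" for a b c :: nat
    using that by linarith
  show ?thesis
    using dim_kos_boundaries_add_le[OF assms, of \<alpha> i, where 'k = 'k]
    unfolding multibetti_def length_kos_basis kos_rank_eq_dim[OF assms] Suc_eq_plus1[symmetric]
    by (simp add: diff)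
qed

lemma multibetti_Un_Int:
  assumes I: "monomial_ideal n I" and J: "monomial_ideal n J"
    and boundaries: "\<And>k. kos_boundaries n I \<alpha> k \<inter> kos_boundaries n J \<alpha> k
      \<subseteq> (kos_boundaries n (I \<inter> J) \<alpha> k :: (nat set \<Rightarrow> 'k::field) set)"
  shows "int (multibetti TYPE('k) n (I \<union> J) i \<alpha>) = int (multibetti TYPE('k) n I i \<alpha>)
     + int (multibetti TYPE('k) n J i \<alpha>) - int (multibetti TYPE('k) n (I \<inter> J) i \<alpha>)"
proof -
  have dims: "fun_space.dim (kos_boundaries n (I \<union> J) \<alpha> k :: (nat set \<Rightarrow> 'k) set)
      + fun_space.dim (kos_boundaries n (I \<inter> J) \<alpha> k :: (nat set \<Rightarrow> 'k) set)
    = fun_space.dim (kos_boundaries n I \<alpha> k :: (nat set \<Rightarrow> 'k) set)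
      + fun_space.dim (kos_boundaries n J \<alpha> k :: (nat set \<Rightarrow> 'k) set)" for k
  proof -
    let ?X = "koszul_coeff ` kos_sets n I \<alpha> k :: (nat set \<Rightarrow> 'k) set"
    let ?Y = "koszul_coeff ` kos_sets n J \<alpha> k :: (nat set \<Rightarrow> 'k) set"
    have "kos_boundaries n (I \<inter> J) \<alpha> k
        \<subseteq> (kos_boundaries n I \<alpha> k \<inter> kos_boundaries n J \<alpha> k :: (nat set \<Rightarrow> 'k) set)"
      unfolding kos_boundaries_def kos_sets_Int by (intro Int_greatest fun_space.span_mono) auto
    with boundaries[of k] have "kos_boundaries n I \<alpha> k \<inter> kos_boundaries n J \<alpha> k
        = (kos_boundaries n (I \<inter> J) \<alpha> k :: (nat set \<Rightarrow> 'k) set)"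
      by (rule equalityI)
    moreover have "kos_boundaries n (I \<union> J) \<alpha> k = fun_space.span (?X \<union> ?Y)"
      unfolding kos_boundaries_def kos_sets_Un image_Un ..
    ultimately show ?thesis
      using fun_space.dim_span_Un_Int[of ?X ?Y] finite_kos_sets
      unfolding kos_boundaries_def by simp
  qed
  have cards: "card (kos_sets n (I \<union> J) \<alpha> i) + card (kos_sets n (I \<inter> J) \<alpha> i)
      = card (kos_sets n I \<alpha> i) + card (kos_sets n J \<alpha> i)"
    unfolding kos_sets_Un kos_sets_Int using card_Un_Int[OF finite_kos_sets finite_kos_sets] by simp
  show ?thesis
    unfolding multibetti_eq[OF monomial_ideal_Un[OF I J]] multibetti_eq[OF monomial_ideal_Int[OF I J]]
      multibetti_eq[OF I] multibetti_eq[OF J]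
    using dims[of i] dims[of "Suc i"] cards by linarith
qed

lemma kos_sets_insert_max_var:
  assumes div: "max_var_divisible n d J" and p: "max_var n \<alpha> p" and "p \<notin> F"
    and F: "F \<in> kos_sets n J \<alpha> k" and deg: "d + k < mdeg n \<alpha>"
  shows "insert p F \<in> kos_sets n J \<alpha> (Suc k)"
proof -
  define w where "w = (\<lambda>l. if l \<in> F then \<alpha> l - 1 else \<alpha> l)"
  have F_n: "F \<subseteq> {0..<n}" and F_card: "card F = k" and F_pos: "\<forall>l\<in>F. 1 \<le> \<alpha> l"
    and w: "w \<in> J"
    using F unfolding kos_sets_def w_def by auto
  have "mdeg n w + k = mdeg n \<alpha>"
    using mdeg_divide_vars[OF F_n F_pos] F_card unfolding w_def by simp
  with deg have "d < mdeg n w"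
    by linarith
  moreover have "max_var n w p"
    using p \<open>p \<notin> F\<close> unfolding max_var_def w_def by auto
  ultimately have "w(p := w p - 1) \<in> J"
    using div w unfolding max_var_divisible_def by blast
  moreover have "w(p := w p - 1) = (\<lambda>l. if l \<in> insert p F then \<alpha> l - 1 else \<alpha> l)"
    using \<open>p \<notin> F\<close> unfolding w_def by (auto simp: fun_eq_iff)
  moreover have "finite F"
    using F_n finite_subset by blast
  ultimately show ?thesis
    using F_n F_card F_pos p \<open>p \<notin> F\<close> unfolding kos_sets_def max_var_def by auto
qed

text \<open>Wedging with e_p for the last variable x_p of the multidegree contracts the cycles.\<close>
lemma kos_cycle_in_boundaries:
  assumes div: "max_var_divisible n d J" and \<alpha>: "\<alpha> \<in> mons n" and deg: "d + k < mdeg n \<alpha>"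
    and x: "x \<in> (kos_chains n J \<alpha> k :: (nat set \<Rightarrow> 'k::field) set)"
    and cycle: "koszul_diff {0..<n} x = 0"
  shows "x \<in> kos_boundaries n J \<alpha> (Suc k)"
proof -
  obtain p where p: "max_var n \<alpha> p"
    using max_var_exists[OF \<alpha>] deg by auto
  have x_supp: "x F \<noteq> 0 \<Longrightarrow> F \<in> kos_sets n J \<alpha> k" for F
    using x unfolding kos_chains_eq supported_on_def by blast
  have "l \<le> p" if "1 \<le> \<alpha> l" for l
    using p that unfolding max_var_def by (metis not_le not_one_le_zero)
  then have below_p: "x F \<noteq> 0 \<Longrightarrow> F \<subseteq> {0..<n} \<and> (\<forall>l\<in>F. l \<le> p)" for F
    using x_supp[of F] unfolding kos_sets_def by blast
  have "koszul_homotopy p (koszul_diff {0..<n} x) = 0"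
    unfolding cycle koszul_homotopy_def by (simp add: fun_eq_iff)
  then have "koszul_diff {0..<n} (koszul_homotopy p x) G = x G" for G
    using koszul_homotopy_identity[of "{0..<n}" p x G] below_p p
    unfolding max_var_def by simp
  then have "x = koszul_diff {0..<n} (koszul_homotopy p x)"
    by auto
  moreover have "koszul_homotopy p x \<in> kos_chains n J \<alpha> (Suc k)"
    unfolding kos_chains_eq supported_on_def
  proof (intro CollectI allI impI)
    fix G
    assume "koszul_homotopy p x G \<noteq> 0"
    then have "p \<in> G" and "x (G - {p}) \<noteq> 0"
      unfolding koszul_homotopy_def by (auto split: if_splits)
    then have "insert p (G - {p}) \<in> kos_sets n J \<alpha> (Suc k)"
      using kos_sets_insert_max_var[OF div p _ x_supp deg] by blast
    with \<open>p \<in> G\<close> show "G \<in> kos_sets n J \<alpha> (Suc k)"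
      by (simp add: insert_absorb)
  qed
  ultimately show ?thesis
    using kos_boundaries_eq_image by blast
qed

lemma kos_sets_empty_low_degree:
  assumes "\<forall>w\<in>J. d \<le> mdeg n w" and "mdeg n \<alpha> < d + k"
  shows "kos_sets n J \<alpha> k = {}"
proof (rule ccontr)
  assume "kos_sets n J \<alpha> k \<noteq> {}"
  then obtain F where F_n: "F \<subseteq> {0..<n}" and F_card: "card F = k"
    and F_pos: "\<forall>l\<in>F. 1 \<le> \<alpha> l" and w: "(\<lambda>l. if l \<in> F then \<alpha> l - 1 else \<alpha> l) \<in> J"
    unfolding kos_sets_def by blast
  with assms(1) mdeg_divide_vars[OF F_n F_pos] have "d + k \<le> mdeg n \<alpha>"
    by fastforce
  with assms(2) show False
    by linarith
qed

lemma kos_boundaries_Int: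
  assumes I: "monomial_ideal n I" and J: "monomial_ideal n J" and deg_J: "\<forall>w\<in>J. d \<le> mdeg n w"
    and div: "max_var_divisible n d (I \<inter> J)" and \<alpha>: "\<alpha> \<in> mons n"
  shows "kos_boundaries n I \<alpha> k \<inter> kos_boundaries n J \<alpha> k
    \<subseteq> (kos_boundaries n (I \<inter> J) \<alpha> k :: (nat set \<Rightarrow> 'k::field) set)"
proof
  fix x :: "nat set \<Rightarrow> 'k"
  assume x: "x \<in> kos_boundaries n I \<alpha> k \<inter> kos_boundaries n J \<alpha> k"
  show "x \<in> kos_boundaries n (I \<inter> J) \<alpha> k"
  proof (cases k)
    case 0
    then show ?thesis
      using x by (simp add: kos_boundaries_0)
  next
    case (Suc k')
    show ?thesis
    proof (cases "d + k' < mdeg n \<alpha>")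
      case True
      have "x \<in> kos_chains n I \<alpha> k'" and "x \<in> kos_chains n J \<alpha> k'"
        using x kos_boundaries_subset_chains[OF I] kos_boundaries_subset_chains[OF J] Suc by blast+
      then have "x \<in> kos_chains n (I \<inter> J) \<alpha> k'"
        unfolding kos_chains_eq kos_sets_Int supported_on_def by blast
      moreover have "koszul_diff {0..<n} x = 0"
        using x koszul_diff_kos_boundaries by blast
      ultimately show ?thesis
        using kos_cycle_in_boundaries[OF div \<alpha> True] Suc by blast
    next
      case False
      with Suc have "kos_sets n J \<alpha> k = {}"
        using kos_sets_empty_low_degree[OF deg_J] by simp
      then show ?thesis
        using x by (simp add: kos_boundaries_def fun_space.span_zero)
    qed
  qed
qed

text \<open>The Mayer-Vietoris sequence of I and J splits in each multidegree.\<close>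
lemma betti_Un_Int:
  assumes I: "monomial_ideal n I" and J: "monomial_ideal n J" and deg_J: "\<forall>w\<in>J. d \<le> mdeg n w"
    and div: "max_var_divisible n d (I \<inter> J)"
  shows "int (betti TYPE('k::field) n (I \<union> J) i j) = int (betti TYPE('k) n I i j)
    + int (betti TYPE('k) n J i j) - int (betti TYPE('k) n (I \<inter> J) i j)"
proof -
  let ?A = "{a \<in> mons n. mdeg n a = j}"
  have "(\<Sum>\<alpha>\<in>?A. int (multibetti TYPE('k) n (I \<union> J) i \<alpha>))
      = (\<Sum>\<alpha>\<in>?A. int (multibetti TYPE('k) n I i \<alpha>) + int (multibetti TYPE('k) n J i \<alpha>)
          - int (multibetti TYPE('k) n (I \<inter> J) i \<alpha>))"
    using multibetti_Un_Int[OF I J kos_boundaries_Int[OF I J deg_J div]] by (intro sum.cong) auto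
  then show ?thesis
    unfolding betti_def of_nat_sum by (simp add: sum.distrib sum_subtractf)
qed

lemma max_var_divisible_Int:
  "max_var_divisible n d I \<Longrightarrow> max_var_divisible n d J \<Longrightarrow> max_var_divisible n d (I \<inter> J)"
  unfolding max_var_divisible_def by blast

theorem lemma6p2:
  fixes n r d :: nat and m :: "nat \<Rightarrow> (nat \<Rightarrow> nat)"
  assumes "2 \<le> r"
    and "\<forall>t\<in>{1..r}. m t \<in> mons n"
    and "d = mdeg n (m r)"
    and "\<forall>t\<in>{1..r}. mdeg n (m t) \<le> d"
  shows "(\<forall>g\<in>mingens (Borel n {m r} \<inter> Borel n (m ` {1..r-1})). mdeg n g = d) \<and>
    (\<forall>i j. int (betti TYPE('k::field) n (Borel n (m ` {1..r})) i j) =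
        int (betti TYPE('k) n (Borel n (m ` {1..r-1})) i j)
      + int (betti TYPE('k) n (Borel n {m r}) i j)
      - int (betti TYPE('k) n (Borel n {m r} \<inter> Borel n (m ` {1..r-1})) i j))"
proof -
  let ?B' = "Borel n (m ` {1..r-1})" and ?B_r = "Borel n {m r}"
  have gens: "m ` {1..r-1} \<subseteq> mons n" "{m r} \<subseteq> mons n"
    using assms(1,2) by auto
  have B': "monomial_ideal n ?B'" and B_r: "monomial_ideal n ?B_r"
    using borel_ideal_Borel[OF gens(1)] borel_ideal_Borel[OF gens(2)]
    unfolding borel_ideal_def by blast+
  have deg_B_r: "\<forall>w\<in>?B_r. d \<le> mdeg n w"
    using Borel_mdeg_ge[OF gens(2)] assms(3) by blast
  have div: "max_var_divisible n d (?B' \<inter> ?B_r)"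
    using assms(1,3,4) gens by (intro max_var_divisible_Int max_var_divisible_Borel) auto
  have "{1..r} = insert r {1..r-1}"
    using assms(1) by auto
  then have "m ` {1..r} = m ` {1..r-1} \<union> {m r}"
    by auto
  then have B: "Borel n (m ` {1..r}) = ?B' \<union> ?B_r"
    using Borel_Un[OF gens] by simp
  show ?thesis
  proof (intro conjI ballI allI)
    fix g
    assume "g \<in> mingens (?B_r \<inter> ?B')"
    then show "mdeg n g = d"
      using mdeg_mingens[OF monomial_ideal_Int[OF B' B_r] _ div] deg_B_r by (simp add: Int_commute)
  next
    fix i j
    show "int (betti TYPE('k) n (Borel n (m ` {1..r})) i j) = int (betti TYPE('k) n ?B' i j)
        + int (betti TYPE('k) n ?B_r i j) - int (betti TYPE('k) n (?B_r \<inter> ?B') i j)"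
      unfolding B Int_commute[of ?B_r] by (rule betti_Un_Int[OF B' B_r deg_B_r div])
  qed
qed

end
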